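(* Let $K$ be an algebraically closed field of characteristic zero, $m,n\ge1$, $\varphi=(\varphi_1,\ldots,\varphi_n)\in K[[t_1,\ldots,t_m]]^n$, and let $E_M=\prod_{1\le i\le n,\ \|J\|_\infty\le r}x_{i,J}^{M_{i,J}}$ be a differential monomial. Then \[\operatorname{trop}(E_M(\varphi))=\operatorname{Vert}\bigl(E_M(\operatorname{Supp}(\varphi))\bigr)=\epsilon_M(\operatorname{Supp}(\varphi)).\]
   Context: Notation: $t^J=t_1^{j_1}\cdots t_m^{j_m}$, $\|J\|_\infty=\max_i j_i$, $\Theta(J)=\partial_{t_1}^{j_1}\cdots\partial_{t_m}^{j_m}$. The differential indeterminates $x_{i,J}$ ($1\le i\le n$, $J\in\mathbb{Z}_{\ge0}^m$) represent derivatives $\Theta(J)x_i$; a differential monomial of order $\le r$ is $E_M=\prod_{i,\|J\|_\infty\le r}x_{i,J}^{M_{i,J}}$ with $M=(M_{i,J})$ nonnegative integers, and $E_M(\varphi)$ is obtained by substituting $\Theta(J)\varphi_i$ for $x_{i,J}$. $\operatorname{Supp}(\sum a_Jt^J)=\{J:a_J\neq0\}$, and $\operatorname{Supp}(\varphi)=(\operatorname{Supp}(\varphi_1),\ldots,\operatorname{Supp}(\varphi_n))$. For $X\subseteq\mathbb{Z}_{\ge0}^m$, $\mathcal{N}(X)$ is the convex hull in $\mathbb{R}^m$ of $X+\mathbb{Z}_{\ge0}^m$, $x\in X$ is a vertex if $x\notin\mathcal{N}(X\setminus\{x\})$, $\operatorname{Vert}(X)$ is the set of vertices, and $\operatorname{trop}(\psi)=\operatorname{Vert}(\operatorname{Supp}(\psi))$.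 For $T\subseteq\mathbb{Z}_{\ge0}^m$, $\Theta_{\operatorname{trop}}(J)T=\{(s_1-j_1,\ldots,s_m-j_m):(s_1,\dots,s_m)\in T,\ s_i\ge j_i\ \forall i\}$. For $S=(S_1,\ldots,S_n)$ of subsets of $\mathbb{Z}_{\ge0}^m$, $E_M(S)=\sum_{i,J}M_{i,J}\Theta_{\operatorname{trop}}(J)S_i$ (Minkowski sums, with $kX$ the $k$-fold Minkowski sum and $0X=\{0\}$). The tropical differential monomial $\epsilon_M$ evaluates as $\epsilon_M(S)=\operatorname{Vert}(E_M(S))$. *)

theory Defs
  imports "HOL-Analysis.Analysis" "HOL-Computational_Algebra.Polynomial"
begin

text \<open>Multi-indices J in Z_{>=0}^m are functions 'm => nat for a finite index type 'm
  (CARD('m) = m). A formal power series in K[[t_1..t_m]] is its coefficient function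
  ('m => nat) => 'a.\<close>

type_synonym ('m, 'a) mps = "('m \<Rightarrow> nat) \<Rightarrow> 'a"

definition idx_le :: "('m \<Rightarrow> nat) \<Rightarrow> ('m \<Rightarrow> nat) \<Rightarrow> bool" where
  "idx_le A B \<longleftrightarrow> (\<forall>k. A k \<le> B k)"

definition mps_mult :: "('m::finite, 'a::comm_ring_1) mps \<Rightarrow> ('m, 'a) mps \<Rightarrow> ('m, 'a) mps" where
  "mps_mult f g = (\<lambda>J. \<Sum>A\<in>{A. idx_le A J}. f A * g (\<lambda>k. J k - A k))"

definition mps_one :: "('m::finite, 'a::comm_ring_1) mps" where
  "mps_one = (\<lambda>J. if (\<forall>k. J k = 0) then 1 else 0)"

fun mps_pow :: "('m::finite, 'a::comm_ring_1) mps \<Rightarrow> nat \<Rightarrow> ('m, 'a) mps" where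
  "mps_pow f 0 = mps_one"
| "mps_pow f (Suc k) = mps_mult f (mps_pow f k)"

definition mps_prod :: "('b \<Rightarrow> ('m::finite, 'a::comm_ring_1) mps) \<Rightarrow> 'b set \<Rightarrow> ('m, 'a) mps" where
  "mps_prod F I = Finite_Set.fold (\<lambda>i acc. mps_mult (F i) acc) mps_one I"

text \<open>Theta(J) = d^{j_1}/dt_1^{j_1} ... d^{j_m}/dt_m^{j_m}, applied coefficientwise:
  the coefficient of t^S in Theta(J) f is prod_k (S_k+J_k)!/S_k! times the coefficient of t^(S+J).\<close>
definition mps_Theta :: "('m::finite \<Rightarrow> nat) \<Rightarrow> ('m, 'a::comm_ring_1) mps \<Rightarrow> ('m, 'a) mps" where
  "mps_Theta J f = (\<lambda>S. of_nat (\<Prod>k\<in>UNIV. fact (S k + J k) div fact (S k)) * f (\<lambda>k. S k + J k))"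

definition idx_box :: "nat \<Rightarrow> ('m::finite \<Rightarrow> nat) set" where
  "idx_box r = {J. \<forall>k. J k \<le> r}"

text \<open>E_M(phi) = prod_{1<=i<=n, ||J||_inf <= r} (Theta(J) phi_i)^{M_{i,J}}; components indexed by i < n.\<close>
definition diff_mono_eval ::
  "nat \<Rightarrow> nat \<Rightarrow> (nat \<Rightarrow> ('m::finite \<Rightarrow> nat) \<Rightarrow> nat) \<Rightarrow> (nat \<Rightarrow> ('m, 'a::comm_ring_1) mps) \<Rightarrow> ('m, 'a) mps" where
  "diff_mono_eval n r M \<phi> =
     mps_prod (\<lambda>(i, J). mps_pow (mps_Theta J (\<phi> i)) (M i J)) ({..<n} \<times> idx_box r)"

definition Supp :: "('m, 'a::zero) mps \<Rightarrow> ('m \<Rightarrow> nat) set" where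
  "Supp f = {J. f J \<noteq> 0}"

definition idx_vec :: "('m::finite \<Rightarrow> nat) \<Rightarrow> real ^ 'm" where
  "idx_vec J = (\<chi> k. real (J k))"

definition newton :: "('m::finite \<Rightarrow> nat) set \<Rightarrow> (real ^ 'm) set" where
  "newton X = convex hull {idx_vec (\<lambda>k. x k + y k) | x y. x \<in> X}"

definition Vert :: "('m::finite \<Rightarrow> nat) set \<Rightarrow> ('m \<Rightarrow> nat) set" where
  "Vert X = {x \<in> X. idx_vec x \<notin> newton (X - {x})}"

definition trop :: "('m::finite, 'a::zero) mps \<Rightarrow> ('m \<Rightarrow> nat) set" where
  "trop \<psi> = Vert (Supp \<psi>)"

definition Theta_trop :: "('m \<Rightarrow> nat) \<Rightarrow> ('m \<Rightarrow> nat) set \<Rightarrow> ('m \<Rightarrow> nat) set" where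
  "Theta_trop J T = {(\<lambda>k. s k - J k) | s. s \<in> T \<and> (\<forall>k. J k \<le> s k)}"

definition mink_sum_family :: "('b \<Rightarrow> ('m \<Rightarrow> nat) set) \<Rightarrow> 'b set \<Rightarrow> ('m \<Rightarrow> nat) set" where
  "mink_sum_family A I = {(\<lambda>k. \<Sum>p\<in>I. f p k) | f. \<forall>p\<in>I. f p \<in> A p}"

fun mink_pow :: "('m \<Rightarrow> nat) set \<Rightarrow> nat \<Rightarrow> ('m \<Rightarrow> nat) set" where
  "mink_pow X 0 = {(\<lambda>k. 0)}"
| "mink_pow X (Suc j) = {(\<lambda>k. a k + b k) | a b. a \<in> X \<and> b \<in> mink_pow X j}"

definition diff_mono_trop_sets ::
  "nat \<Rightarrow> nat \<Rightarrow> (nat \<Rightarrow> ('m::finite \<Rightarrow> nat) \<Rightarrow> nat) \<Rightarrow> (nat \<Rightarrow> ('m \<Rightarrow> nat) set) \<Rightarrow> ('m \<Rightarrow> nat) set" where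
  "diff_mono_trop_sets n r M S =
     mink_sum_family (\<lambda>(i, J). mink_pow (Theta_trop J (S i)) (M i J)) ({..<n} \<times> idx_box r)"

definition eps_M ::
  "nat \<Rightarrow> nat \<Rightarrow> (nat \<Rightarrow> ('m::finite \<Rightarrow> nat) \<Rightarrow> nat) \<Rightarrow> (nat \<Rightarrow> ('m \<Rightarrow> nat) set) \<Rightarrow> ('m \<Rightarrow> nat) set" where
  "eps_M n r M S = Vert (diff_mono_trop_sets n r M S)"

end

theory Submission
  imports Defs
begin

text \<open>The support of a product of power series lies in the Minkowski sum of the supports, and a
  vertex of a Minkowski sum \<open>A + B\<close> decomposes uniquely as \<open>a + b\<close> with \<open>a\<close>, \<open>b\<close> vertices of
  \<open>A\<close>, \<open>B\<close>; over a domain the coefficient of the product at such a vertex is the nonzero product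
  of the coefficients at \<open>a\<close> and \<open>b\<close>. Hence the two inclusions \<open>Supp f \<subseteq> E\<close> and
  \<open>Vert E \<subseteq> Supp f\<close> pass from the factors \<open>\<Theta>(J) \<phi>\<^sub>i\<close> (whose support is exactly
  \<open>Theta_trop J (Supp \<phi>\<^sub>i)\<close>, since in characteristic zero the factorial factors do
  not vanish) to \<open>E\<^sub>M(\<phi>)\<close>. These inclusions force \<open>Vert (Supp f) = Vert E\<close>, because
  vertices are exactly the points giving extreme points of the Newton polyhedron, and the
  Newton polyhedron of any set is generated by its vertices (by Dickson's lemma it is generated
  by a finite subset).\<close>

section \<open>Newton polyhedra\<close>

lemma idx_vec_component [simp]: "idx_vec a $ k = real (a k)"
  by (simp add: idx_vec_def)

lemma idx_vec_eq_iff [simp]: "idx_vec a = idx_vec b \<longleftrightarrow> a = b"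
  by (auto simp: vec_eq_iff fun_eq_iff)

lemma idx_vec_add: "idx_vec (\<lambda>k. a k + b k) = idx_vec a + idx_vec b"
  by (simp add: vec_eq_iff)

lemma idx_vec_zero [simp]: "idx_vec (\<lambda>k. 0) = 0"
  by (simp add: vec_eq_iff)

definition newton_points :: "('m::finite \<Rightarrow> nat) set \<Rightarrow> (real ^ 'm) set" where
  "newton_points X = {idx_vec (\<lambda>k. x k + y k) | x y. x \<in> X}"

lemma newton_eq_hull_newton_points: "newton X = convex hull newton_points X"
  by (simp add: newton_def newton_points_def)

lemma convex_newton: "convex (newton X)"
  by (simp add: newton_eq_hull_newton_points)

lemma newton_points_subset_newton: "newton_points X \<subseteq> newton X"
  by (simp add: newton_eq_hull_newton_points hull_subset)

lemma idx_vec_in_newton: "x \<in> X \<Longrightarrow> idx_vec x \<in> newton X"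
  using newton_points_subset_newton[of X]
  by (force simp: newton_points_def intro: exI[of _ "\<lambda>k. 0"])

lemma newton_shift_subset:
  assumes dominated: "\<And>x. x \<in> X \<Longrightarrow> \<exists>y\<in>Y. \<forall>k. y k \<le> x k + b k"
    and v: "v \<in> newton X"
  shows "v + idx_vec b \<in> newton Y"
proof -
  have "(\<lambda>z. idx_vec b + z) ` newton_points X \<subseteq> newton_points Y"
  proof clarify
    fix z assume "z \<in> newton_points X"
    then obtain x n where x: "x \<in> X" and z: "z = idx_vec (\<lambda>k. x k + n k)"
      by (auto simp: newton_points_def)
    obtain y where y: "y \<in> Y" "\<forall>k. y k \<le> x k + b k"
      using dominated[OF x] by blast
    have "idx_vec b + z = idx_vec (\<lambda>k. y k + (x k + b k + n k - y k))"
      using y(2) by (simp add: z vec_eq_iff of_nat_diff add_increasing2)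
    then show "idx_vec b + z \<in> newton_points Y"
      using y(1) by (auto simp: newton_points_def)
  qed
  then have "convex hull ((\<lambda>z. idx_vec b + z) ` newton_points X) \<subseteq> newton Y"
    unfolding newton_eq_hull_newton_points by (rule hull_mono)
  then have "(\<lambda>z. idx_vec b + z) ` newton X \<subseteq> newton Y"
    by (simp add: convex_hull_translation newton_eq_hull_newton_points)
  then show ?thesis
    using v by (auto simp: add.commute)
qed

lemma newton_mono:
  assumes "X \<subseteq> Y" shows "newton X \<subseteq> newton Y"
proof
  fix v assume "v \<in> newton X"
  then have "v + idx_vec (\<lambda>k. 0) \<in> newton Y"
    by (intro newton_shift_subset) (use assms in auto)
  then show "v \<in> newton Y" by simp
qed

lemma newton_plus_idx_vec: "v \<in> newton X \<Longrightarrow> v + idx_vec n \<in> newton X"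
  using newton_shift_subset[of X X n v] by (meson le_add1)

lemma newton_plus_axis:
  assumes v: "v \<in> newton X" and t: "0 \<le> t"
  shows "v + t *\<^sub>R axis k 1 \<in> newton X"
proof -
  define N where "N = real (Suc (nat \<lceil>t\<rceil>))"
  have N: "t \<le> N" "0 < N"
    unfolding N_def by linarith+
  have "v + N *\<^sub>R axis k 1 = v + idx_vec (\<lambda>j. if j = k then Suc (nat \<lceil>t\<rceil>) else 0)"
    by (simp add: vec_eq_iff axis_def N_def)
  then have w: "v + N *\<^sub>R axis k 1 \<in> newton X"
    using newton_plus_idx_vec[OF v] by simp
  have "v + t *\<^sub>R axis k 1 = (1 - t / N) *\<^sub>R v + (t / N) *\<^sub>R (v + N *\<^sub>R axis k 1)"
    using N by (simp add: algebra_simps)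
  also have "\<dots> \<in> newton X"
    using N t by (intro convexD[OF convex_newton v w]) auto
  finally show ?thesis .
qed

lemma newton_plus_nonneg:
  assumes v: "v \<in> newton X" and d: "\<And>k. 0 \<le> d $ k"
  shows "v + d \<in> newton X"
proof -
  have "v + (\<Sum>k\<in>K. d $ k *\<^sub>R axis k 1) \<in> newton X" if "finite K" for K
    using that
  proof (induction K rule: finite_induct)
    case (insert k K)
    then show ?case
      using newton_plus_axis[OF insert.IH d] by (simp add: add.assoc add.commute add.left_commute)
  qed (use v in simp)
  from this[of UNIV] show ?thesis
    using basis_expansion[of d] by (simp add: scalar_mult_eq_scaleR)
qed

section \<open>Vertices as extreme points\<close>

lemma Vert_subset: "Vert X \<subseteq> X"
  by (auto simp: Vert_def)

definition upper_orthant :: "real ^ 'm \<Rightarrow> (real ^ 'm) set" where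
  "upper_orthant p = {z. \<forall>k. p $ k \<le> z $ k}"

lemma convex_upper_orthant: "convex (upper_orthant p)"
  unfolding upper_orthant_def convex_alt by (auto intro: segment_bound_lemma)

lemma extreme_point_of_upper_orthant: "p extreme_point_of upper_orthant p"
  unfolding extreme_point_of_def
proof (intro conjI ballI notI)
  fix a b assume a: "a \<in> upper_orthant p" and b: "b \<in> upper_orthant p"
    and p: "p \<in> open_segment a b"
  then obtain u where "a \<noteq> b" "0 < u" "u < 1" and p_eq: "p = (1 - u) *\<^sub>R a + u *\<^sub>R b"
    by (auto simp: in_segment)
  moreover have "a $ k = b $ k" for k
  proof -
    have "p $ k = (1 - u) * a $ k + u * b $ k"
      using p_eq by simp
    then have "(1 - u) * (a $ k - p $ k) + u * (b $ k - p $ k) = 0"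
      by (simp add: algebra_simps)
    moreover have "0 \<le> (1 - u) * (a $ k - p $ k)" "0 \<le> u * (b $ k - p $ k)"
      using a b \<open>0 < u\<close> \<open>u < 1\<close> by (auto simp: upper_orthant_def)
    ultimately show ?thesis
      using \<open>0 < u\<close> \<open>u < 1\<close> by (simp add: add_nonneg_eq_0_iff)
  qed
  ultimately show False
    by (simp add: vec_eq_iff)
qed (simp add: upper_orthant_def)

lemma mem_upward_if_convex_comb_upper_orthant:
  fixes p :: "real ^ 'm"
  assumes S: "convex S" and upward: "\<And>s d. s \<in> S \<Longrightarrow> (\<And>k. 0 \<le> d $ k) \<Longrightarrow> s + d \<in> S"
    and s: "s1 \<in> upper_orthant p" "s2 \<in> upper_orthant p" and t: "t1 \<in> S" "t2 \<in> S"
    and nonneg: "0 \<le> u1" "0 \<le> u2" "0 \<le> v1" "0 \<le> v2" and pos: "0 < v1 + v2"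
    and sum: "u1 + u2 + v1 + v2 = 1"
    and p: "p = u1 *\<^sub>R s1 + u2 *\<^sub>R s2 + v1 *\<^sub>R t1 + v2 *\<^sub>R t2"
  shows "p \<in> S"
proof -
  define c where "c = v1 + v2"
  have c: "0 < c"
    using pos by (simp add: c_def)
  define t where "t = (v1 / c) *\<^sub>R t1 + (v2 / c) *\<^sub>R t2"
  have "t \<in> S"
    unfolding t_def using c nonneg
    by (intro convexD[OF S t]) (simp_all add: c_def add_divide_distrib[symmetric])
  \<comment> \<open>The weight on the points dominating \<open>p\<close> only pushes \<open>p\<close> upwards from \<open>t\<close>.\<close>
  moreover have "0 \<le> (p - t) $ k" for k
  proof -
    have "c * t $ k = v1 * t1 $ k + v2 * t2 $ k"
      using c by (simp add: t_def field_simps)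
    moreover have "p $ k = u1 * s1 $ k + u2 * s2 $ k + v1 * t1 $ k + v2 * t2 $ k"
      by (simp add: p)
    moreover have "c * p $ k = p $ k - u1 * p $ k - u2 * p $ k"
      using arg_cong[OF sum, of "\<lambda>x. x * p $ k"] by (simp add: c_def algebra_simps)
    moreover have "u1 * p $ k \<le> u1 * s1 $ k" "u2 * p $ k \<le> u2 * s2 $ k"
      using s nonneg by (auto simp: upper_orthant_def intro: mult_left_mono)
    ultimately have "c * t $ k \<le> c * p $ k"
      by linarith
    then show ?thesis
      using c by simp
  qed
  ultimately have "t + (p - t) \<in> S"
    by (rule upward)
  then show ?thesis
    by simp
qed

lemma extreme_point_of_hull_upper_orthant_Un:
  fixes p :: "real ^ 'm"
  assumes S: "convex S" and upward: "\<And>s d. s \<in> S \<Longrightarrow> (\<And>k. 0 \<le> d $ k) \<Longrightarrow> s + d \<in> S"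
    and p_notin: "p \<notin> S"
  shows "p extreme_point_of convex hull (upper_orthant p \<union> S)"
proof (cases "S = {}")
  case True
  then show ?thesis
    by (simp add: hull_same convex_upper_orthant extreme_point_of_upper_orthant)
next
  case False
  have hull: "convex hull (upper_orthant p \<union> S) = {u *\<^sub>R s + v *\<^sub>R t | u v s t.
      0 \<le> u \<and> 0 \<le> v \<and> u + v = 1 \<and> s \<in> upper_orthant p \<and> t \<in> S}"
    by (rule convex_hull_union_two[OF convex_upper_orthant _ S False]) (auto simp: upper_orthant_def)
  show ?thesis
    unfolding extreme_point_of_def
  proof (intro conjI ballI notI)
    show "p \<in> convex hull (upper_orthant p \<union> S)"
      by (rule hull_inc) (simp add: upper_orthant_def)
    fix a b assume "a \<in> convex hull (upper_orthant p \<union> S)" "b \<in> convex hull (upper_orthant p \<union> S)"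
      and seg: "p \<in> open_segment a b"
    then obtain u1 v1 s1 t1 u2 v2 s2 t2 where
      a: "a = u1 *\<^sub>R s1 + v1 *\<^sub>R t1" "0 \<le> u1" "0 \<le> v1" "u1 + v1 = 1" "s1 \<in> upper_orthant p" "t1 \<in> S" and
      b: "b = u2 *\<^sub>R s2 + v2 *\<^sub>R t2" "0 \<le> u2" "0 \<le> v2" "u2 + v2 = 1" "s2 \<in> upper_orthant p" "t2 \<in> S"
      unfolding hull by blast
    obtain w where w: "0 < w" "w < 1" and p_eq: "p = (1 - w) *\<^sub>R a + w *\<^sub>R b"
      using seg by (auto simp: in_segment)
    have nonneg: "0 \<le> (1 - w) * u1" "0 \<le> w * u2" "0 \<le> (1 - w) * v1" "0 \<le> w * v2"
      using w a b by simp_all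
    show False
    proof (cases "(1 - w) * v1 + w * v2 = 0")
      case True
      then have "v1 = 0" "v2 = 0"
        using nonneg w by (auto simp: add_nonneg_eq_0_iff)
      then have "a \<in> upper_orthant p" "b \<in> upper_orthant p"
        using a b by simp_all
      then show False
        using extreme_point_of_upper_orthant seg by (auto simp: extreme_point_of_def)
    next
      case False
      have "(1 - w) * u1 + w * u2 + (1 - w) * v1 + w * v2 = (1 - w) * (u1 + v1) + w * (u2 + v2)"
        by (simp add: algebra_simps)
      then have sum: "(1 - w) * u1 + w * u2 + (1 - w) * v1 + w * v2 = 1"
        using a(4) b(4) by simp
      have comb: "p = ((1 - w) * u1) *\<^sub>R s1 + (w * u2) *\<^sub>R s2 + ((1 - w) * v1) *\<^sub>R t1 + (w * v2) *\<^sub>R t2"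
        unfolding p_eq a(1) b(1) by (simp add: scaleR_add_right add_ac)
      have "0 < (1 - w) * v1 + w * v2"
        using False nonneg by linarith
      then have "p \<in> S"
        using mem_upward_if_convex_comb_upper_orthant[OF S upward a(5) b(5) a(6) b(6) nonneg _ sum comb] by blast
      then show False
        using p_notin by blast
    qed
  qed
qed

lemma newton_subset_hull_upper_orthant_Un:
  "newton X \<subseteq> convex hull (upper_orthant (idx_vec x) \<union> newton (X - {x}))"
  unfolding newton_eq_hull_newton_points[of X]
proof (rule hull_mono, rule subsetI)
  fix z assume "z \<in> newton_points X"
  then obtain y n where y: "y \<in> X" and z: "z = idx_vec (\<lambda>k. y k + n k)"
    by (auto simp: newton_points_def)
  show "z \<in> upper_orthant (idx_vec x) \<union> newton (X - {x})"
  proof (cases "y = x")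
    case False
    then have "z \<in> newton_points (X - {x})"
      using y z by (auto simp: newton_points_def)
    then show ?thesis
      using newton_points_subset_newton by blast
  qed (simp add: z upper_orthant_def)
qed

lemma extreme_point_of_newton_if_Vert:
  assumes x: "x \<in> Vert X"
  shows "idx_vec x extreme_point_of newton X"
proof -
  have "idx_vec x extreme_point_of convex hull (upper_orthant (idx_vec x) \<union> newton (X - {x}))"
    using x by (intro extreme_point_of_hull_upper_orthant_Un convex_newton newton_plus_nonneg)
      (auto simp: Vert_def)
  then show ?thesis
    using newton_subset_hull_upper_orthant_Un[of X x] idx_vec_in_newton[of x X] x
    by (auto simp: extreme_point_of_def Vert_def)
qed

lemma extreme_point_of_newton_minimal:
  fixes x y :: "'m::finite \<Rightarrow> nat"
  assumes ext: "idx_vec x extreme_point_of newton X" and y: "y \<in> X" and le: "\<forall>k. y k \<le> x k"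
  shows "y = x"
proof (rule ccontr)
  assume "y \<noteq> x"
  then obtain k where k: "y k < x k"
    using le by (metis fun_eq_iff le_neq_implies_less)
  define e :: "real ^ 'm" where "e = axis k 1"
  have "idx_vec y + (idx_vec x - e - idx_vec y) \<in> newton X"
    using le k by (intro newton_plus_nonneg idx_vec_in_newton y) (auto simp: e_def axis_def)
  moreover have "idx_vec x + e \<in> newton X"
    using ext by (intro newton_plus_nonneg) (auto simp: e_def axis_def extreme_point_of_def)
  moreover have "idx_vec x = midpoint (idx_vec x - e) (idx_vec x + e)"
    by (simp add: midpoint_def vec_eq_iff field_simps)
  moreover have "idx_vec x - e \<noteq> idx_vec x + e"
    by (auto simp: e_def vec_eq_iff axis_def)
  ultimately show False
    using ext midpoint_in_open_segment unfolding extreme_point_of_def by (metis diff_add_cancel add.commute)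
qed

lemma Vert_if_extreme_point_of_newton:
  assumes x: "x \<in> X" and ext: "idx_vec x extreme_point_of newton X"
  shows "x \<in> Vert X"
proof -
  have "newton_points (X - {x}) \<subseteq> newton X - {idx_vec x}"
  proof
    fix z assume "z \<in> newton_points (X - {x})"
    then obtain y n where y: "y \<in> X" "y \<noteq> x" and z: "z = idx_vec (\<lambda>k. y k + n k)"
      by (auto simp: newton_points_def)
    have "z \<in> newton X"
      using y z newton_points_subset_newton by (force simp: newton_points_def)
    moreover have "z \<noteq> idx_vec x"
      using extreme_point_of_newton_minimal[OF ext y(1)] y(2) z by auto
    ultimately show "z \<in> newton X - {idx_vec x}"
      by blast
  qed
  then have "newton (X - {x}) \<subseteq> newton X - {idx_vec x}"
    unfolding newton_eq_hull_newton_points[of "X - {x}"]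
    by (rule hull_minimal) (use ext extreme_point_of_stillconvex convex_newton in blast)
  then show ?thesis
    using x by (auto simp: Vert_def)
qed

lemma Vert_iff_extreme_point_of_newton:
  "x \<in> X \<Longrightarrow> x \<in> Vert X \<longleftrightarrow> idx_vec x extreme_point_of newton X"
  using extreme_point_of_newton_if_Vert Vert_if_extreme_point_of_newton by blast

section \<open>Vertices generate the Newton polyhedron\<close>

lemma Vert_if_newton_eq:
  assumes "newton Z = newton Y" "y \<in> Y" "y \<in> Vert Z"
  shows "y \<in> Vert Y"
proof -
  have "y \<in> Z"
    using assms(3) Vert_subset by blast
  then show ?thesis
    using Vert_iff_extreme_point_of_newton[OF \<open>y \<in> Z\<close>]
      Vert_iff_extreme_point_of_newton[OF assms(2)] assms(1,3) by simp
qed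

lemma newton_remove_non_Vert:
  assumes "x \<notin> Vert X"
  shows "newton (X - {x}) = newton X"
proof
  show "newton (X - {x}) \<subseteq> newton X"
    by (rule newton_mono) blast
  have "newton_points X \<subseteq> newton (X - {x})"
  proof
    fix z assume "z \<in> newton_points X"
    then obtain y n where y: "y \<in> X" and z: "z = idx_vec (\<lambda>k. y k + n k)"
      by (auto simp: newton_points_def)
    show "z \<in> newton (X - {x})"
    proof (cases "y = x")
      case True
      then show ?thesis
        using assms y newton_plus_idx_vec[of "idx_vec x" "X - {x}" n]
        by (simp add: z idx_vec_add Vert_def)
    next
      case False
      then have "z \<in> newton_points (X - {x})"
        using y z by (auto simp: newton_points_def)
      then show ?thesis
        using newton_points_subset_newton by blast
    qed
  qed
  then show "newton X \<subseteq> newton (X - {x})"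
    unfolding newton_eq_hull_newton_points[of X] by (rule hull_minimal) (rule convex_newton)
qed

lemma newton_subset_newton_Vert_finite:
  "finite X \<Longrightarrow> newton X \<subseteq> newton (Vert X)"
proof (induction X rule: finite_psubset_induct)
  case (psubset X)
  show ?case
  proof (cases "X \<subseteq> Vert X")
    case False
    then obtain x where x: "x \<in> X" "x \<notin> Vert X"
      by blast
    have eq: "newton (X - {x}) = newton X"
      by (rule newton_remove_non_Vert[OF x(2)])
    have "Vert (X - {x}) \<subseteq> Vert X"
      using Vert_subset Vert_if_newton_eq[OF eq] by blast
    then show ?thesis
      using psubset.IH[of "X - {x}"] x(1) eq newton_mono by blast
  qed (simp add: newton_mono)
qed

lemma finite_dominating_subset_on:
  fixes X :: "('m \<Rightarrow> nat) set"
  assumes "finite K"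
  shows "\<exists>F. finite F \<and> F \<subseteq> X \<and> (\<forall>y\<in>X. \<exists>f\<in>F. \<forall>k\<in>K. f k \<le> y k)"
  using assms
proof (induction K arbitrary: X rule: finite_induct)
  case empty
  show ?case
  proof (cases "X = {}")
    case False
    then obtain x where "x \<in> X"
      by blast
    then show ?thesis
      by (intro exI[of _ "{x}"]) simp
  qed (intro exI[of _ "{}"], simp)
next
  case (insert j K)
  obtain F0 where F0: "finite F0" "F0 \<subseteq> X" "\<forall>y\<in>X. \<exists>f\<in>F0. \<forall>k\<in>K. f k \<le> y k"
    using insert.IH[of X] by (elim exE conjE)
  have "\<forall>c. \<exists>G. finite G \<and> G \<subseteq> {y\<in>X. y j = c} \<and> (\<forall>y\<in>{y\<in>X. y j = c}. \<exists>f\<in>G. \<forall>k\<in>K. f k \<le> y k)"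
    by (intro allI insert.IH)
  then obtain G where G: "\<forall>c. finite (G c) \<and> G c \<subseteq> {y\<in>X. y j = c} \<and>
      (\<forall>y\<in>{y\<in>X. y j = c}. \<exists>f\<in>G c. \<forall>k\<in>K. f k \<le> y k)"
    by (rule choice[THEN exE])
  \<comment> \<open>Points whose \<open>j\<close>-th coordinate exceeds every \<open>f j\<close>, \<open>f \<in> F0\<close>, are dominated by \<open>F0\<close>;
    each of the finitely many smaller values of that coordinate is handled by the hypothesis.\<close>
  define B where "B = (\<Sum>f\<in>F0. f j)"
  show ?case
  proof (intro exI[of _ "F0 \<union> (\<Union>c<B. G c)"] conjI ballI)
    show "finite (F0 \<union> (\<Union>c<B. G c))" "F0 \<union> (\<Union>c<B. G c) \<subseteq> X"
      using F0 G by blast+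
    fix y assume y: "y \<in> X"
    show "\<exists>f\<in>F0 \<union> (\<Union>c<B. G c). \<forall>k\<in>insert j K. f k \<le> y k"
    proof (cases "y j < B")
      case True
      then obtain f where f: "f \<in> G (y j)" "\<forall>k\<in>K. f k \<le> y k"
        using G y by blast
      moreover have "f j = y j"
        using G f(1) by blast
      ultimately show ?thesis
        using True by (intro bexI[of _ f]) auto
    next
      case False
      then obtain f where "f \<in> F0" "\<forall>k\<in>K. f k \<le> y k"
        using F0(3) y by blast
      moreover have "f j \<le> y j"
        using member_le_sum[OF \<open>f \<in> F0\<close> _ F0(1), of "\<lambda>f. f j"] False by (simp add: B_def)
      ultimately show ?thesis
        by (intro bexI[of _ f]) auto
    qed
  qed
qed

lemma newton_eq_newton_finite_subset:
  fixes X :: "('m::finite \<Rightarrow> nat) set"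
  obtains F where "finite F" "F \<subseteq> X" "newton F = newton X"
proof -
  obtain F where F: "finite F" "F \<subseteq> X" "\<forall>y\<in>X. \<exists>f\<in>F. \<forall>k. f k \<le> y k"
    using finite_dominating_subset_on[of UNIV X] by auto
  have "newton X \<subseteq> newton F"
  proof
    fix v assume "v \<in> newton X"
    then have "v + idx_vec (\<lambda>k. 0) \<in> newton F"
      by (intro newton_shift_subset) (use F(3) in auto)
    then show "v \<in> newton F"
      by simp
  qed
  then show ?thesis
    using newton_mono[OF F(2)] by (intro that[OF F(1,2)]) blast
qed

lemma newton_subset_newton_Vert: "newton X \<subseteq> newton (Vert X)"
proof -
  obtain F where F: "finite F" "F \<subseteq> X" "newton F = newton X"
    by (rule newton_eq_newton_finite_subset)
  have "Vert F \<subseteq> Vert X"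
  proof
    fix y assume "y \<in> Vert F"
    moreover from this have "y \<in> X"
      using Vert_subset F(2) by blast
    ultimately show "y \<in> Vert X"
      using Vert_if_newton_eq[OF F(3)] by blast
  qed
  have "newton X = newton F"
    using F(3) by simp
  also have "\<dots> \<subseteq> newton (Vert F)"
    by (rule newton_subset_newton_Vert_finite[OF F(1)])
  also have "\<dots> \<subseteq> newton (Vert X)"
    by (rule newton_mono) fact
  finally show ?thesis .
qed

lemma Vert_eq_if_between:
  assumes "C \<subseteq> D" "Vert D \<subseteq> C"
  shows "Vert C = Vert D"
proof
  show "Vert D \<subseteq> Vert C"
  proof
    fix x assume x: "x \<in> Vert D"
    have "newton (C - {x}) \<subseteq> newton (D - {x})"
      using assms(1) by (intro newton_mono) blast
    then show "x \<in> Vert C"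
      using x assms(2) unfolding Vert_def by blast
  qed
  show "Vert C \<subseteq> Vert D"
  proof
    fix x assume x: "x \<in> Vert C"
    show "x \<in> Vert D"
    proof (rule ccontr)
      assume "x \<notin> Vert D"
      then have "newton (Vert D) \<subseteq> newton (C - {x})"
        using assms(2) by (intro newton_mono) blast
      moreover have "idx_vec x \<in> newton D"
        using x assms(1) Vert_subset by (intro idx_vec_in_newton) blast
      ultimately have "idx_vec x \<in> newton (C - {x})"
        using newton_subset_newton_Vert[of D] by blast
      then show False
        using x unfolding Vert_def by blast
    qed
  qed
qed

section \<open>Minkowski sums\<close>

definition mink_plus :: "('m \<Rightarrow> nat) set \<Rightarrow> ('m \<Rightarrow> nat) set \<Rightarrow> ('m \<Rightarrow> nat) set" where
  "mink_plus A B = {(\<lambda>k. a k + b k) | a b. a \<in> A \<and> b \<in> B}"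

lemma mink_plusI: "a \<in> A \<Longrightarrow> b \<in> B \<Longrightarrow> x = (\<lambda>k. a k + b k) \<Longrightarrow> x \<in> mink_plus A B"
  unfolding mink_plus_def by blast

lemma mink_plusE:
  assumes "x \<in> mink_plus A B"
  obtains a b where "a \<in> A" "b \<in> B" "x = (\<lambda>k. a k + b k)"
  using assms unfolding mink_plus_def by blast

lemma mink_plus_commute: "mink_plus A B = mink_plus B A"
proof -
  have "mink_plus A B \<subseteq> mink_plus B A" for A B :: "('m \<Rightarrow> nat) set"
  proof
    fix x assume "x \<in> mink_plus A B"
    then obtain a b where "a \<in> A" "b \<in> B" "x = (\<lambda>k. a k + b k)"
      by (rule mink_plusE)
    then show "x \<in> mink_plus B A"
      by (intro mink_plusI[of b B a A]) (auto simp: add.commute)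
  qed
  then show ?thesis
    by blast
qed

lemma mink_plus_mono: "A \<subseteq> A' \<Longrightarrow> B \<subseteq> B' \<Longrightarrow> mink_plus A B \<subseteq> mink_plus A' B'"
  unfolding mink_plus_def by blast

lemma Vert_mink_plus_summand:
  assumes x: "x \<in> Vert (mink_plus A B)" and a: "a \<in> A" and b: "b \<in> B"
    and x_eq: "x = (\<lambda>k. a k + b k)"
  shows "a \<in> Vert A"
proof (rule ccontr)
  assume "a \<notin> Vert A"
  then have "idx_vec a \<in> newton (A - {a})"
    using a by (simp add: Vert_def)
  then have "idx_vec a + idx_vec b \<in> newton (mink_plus A B - {x})"
  proof (rule newton_shift_subset[rotated])
    fix a' assume "a' \<in> A - {a}"
    then have "(\<lambda>k. a' k + b k) \<in> mink_plus A B - {x}"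
      using b by (auto simp: x_eq fun_eq_iff intro: mink_plusI)
    then show "\<exists>y\<in>mink_plus A B - {x}. \<forall>k. y k \<le> a' k + b k"
      by (intro bexI[of _ "\<lambda>k. a' k + b k"]) simp_all
  qed
  then show False
    using x by (simp add: x_eq idx_vec_add Vert_def)
qed

lemma Vert_mink_plus_decomp_unique:
  assumes x: "x \<in> Vert (mink_plus A B)"
    and ab: "a \<in> A" "b \<in> B" "x = (\<lambda>k. a k + b k)"
    and ab': "a' \<in> A" "b' \<in> B" "x = (\<lambda>k. a' k + b' k)"
  shows "a' = a"
proof (rule ccontr)
  assume "a' \<noteq> a"
  have "b' \<noteq> b"
  proof
    assume "b' = b"
    then have "a' k = a k" for k
      using fun_cong[OF ab(3), of k] fun_cong[OF ab'(3), of k] by simp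
    then show False
      using \<open>a' \<noteq> a\<close> by blast
  qed
  define y1 where "y1 = (\<lambda>k. a k + b' k)"
  define y2 where "y2 = (\<lambda>k. a' k + b k)"
  have "y1 \<in> mink_plus A B - {x}" "y2 \<in> mink_plus A B - {x}"
    using ab ab' \<open>a' \<noteq> a\<close> \<open>b' \<noteq> b\<close> by (auto simp: y1_def y2_def fun_eq_iff intro: mink_plusI)
  \<comment> \<open>\<open>y1 + y2 = 2x\<close>, so \<open>x\<close> is the midpoint of two other points of the sum.\<close>
  then have "(1/2) *\<^sub>R idx_vec y1 + (1/2) *\<^sub>R idx_vec y2 \<in> newton (mink_plus A B - {x})"
    by (intro convexD[OF convex_newton] idx_vec_in_newton) auto
  moreover have "(1/2) *\<^sub>R idx_vec y1 + (1/2) *\<^sub>R idx_vec y2 = idx_vec x"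
  proof -
    have "real (y1 k) + real (y2 k) = 2 * real (x k)" for k
      using fun_cong[OF ab(3), of k] fun_cong[OF ab'(3), of k] by (simp add: y1_def y2_def)
    then show ?thesis
      by (simp add: vec_eq_iff field_simps)
  qed
  ultimately show False
    using x by (simp add: Vert_def)
qed

lemma mink_sum_family_empty: "mink_sum_family A {} = {\<lambda>k. 0}"
  by (auto simp: mink_sum_family_def)

lemma mink_sum_family_insert:
  assumes "finite I" "i \<notin> I"
  shows "mink_sum_family A (insert i I) = mink_plus (A i) (mink_sum_family A I)"
proof (intro set_eqI iffI)
  fix z assume "z \<in> mink_sum_family A (insert i I)"
  then obtain f where f: "\<forall>p\<in>insert i I. f p \<in> A p" "z = (\<lambda>k. \<Sum>p\<in>insert i I. f p k)"
    unfolding mink_sum_family_def by blast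
  then show "z \<in> mink_plus (A i) (mink_sum_family A I)"
    using assms by (intro mink_plusI[of "f i" _ "\<lambda>k. \<Sum>p\<in>I. f p k"]) (auto simp: mink_sum_family_def)
next
  fix z assume "z \<in> mink_plus (A i) (mink_sum_family A I)"
  then obtain a g where a: "a \<in> A i" and g: "\<forall>p\<in>I. g p \<in> A p"
    and z: "z = (\<lambda>k. a k + (\<Sum>p\<in>I. g p k))"
    by (auto elim!: mink_plusE simp: mink_sum_family_def)
  have "(\<Sum>p\<in>I. (g(i := a)) p k) = (\<Sum>p\<in>I. g p k)" for k
    using assms(2) by (intro sum.cong) auto
  then have "z = (\<lambda>k. \<Sum>p\<in>insert i I. (g(i := a)) p k)"
    using assms by (simp add: z)
  moreover have "\<forall>p\<in>insert i I. (g(i := a)) p \<in> A p"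
    using a g by simp
  ultimately show "z \<in> mink_sum_family A (insert i I)"
    unfolding mink_sum_family_def by blast
qed

section \<open>Multivariate power series\<close>

lemma finite_idx_le: "finite {A :: 'm::finite \<Rightarrow> nat. idx_le A J}"
proof -
  have "{A :: 'm \<Rightarrow> nat. idx_le A J} = PiE UNIV (\<lambda>k. {..J k})"
    by (auto simp: idx_le_def PiE_def Pi_def extensional_def)
  then show ?thesis
    by (simp add: finite_PiE)
qed

lemma finite_idx_box: "finite (idx_box r :: ('m::finite \<Rightarrow> nat) set)"
proof -
  have "(idx_box r :: ('m \<Rightarrow> nat) set) = PiE UNIV (\<lambda>k. {..r})"
    by (auto simp: idx_box_def PiE_def Pi_def extensional_def)
  then show ?thesis
    by (simp add: finite_PiE)
qed

lemma mps_mult_mps_mult_eq: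
  fixes f g h :: "('m::finite, 'a::comm_ring_1) mps"
  shows "mps_mult f (mps_mult g h) J =
    (\<Sum>(A, B)\<in>{(A, B). \<forall>k. A k + B k \<le> J k}. f A * g B * h (\<lambda>k. J k - A k - B k))"
proof -
  have le_iff: "A k \<le> J k \<and> B k \<le> J k - A k \<longleftrightarrow> A k + B k \<le> J k" for A B :: "'m \<Rightarrow> nat" and k
    by arith
  have pairs: "(SIGMA A:{A. idx_le A J}. {B. idx_le B (\<lambda>k. J k - A k)}) = {(A, B). \<forall>k. A k + B k \<le> J k}"
    unfolding idx_le_def le_iff[symmetric] by auto
  have "mps_mult f (mps_mult g h) J =
      (\<Sum>A\<in>{A. idx_le A J}. \<Sum>B\<in>{B. idx_le B (\<lambda>k. J k - A k)}. f A * g B * h (\<lambda>k. J k - A k - B k))"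
    by (simp add: mps_mult_def sum_distrib_left mult.assoc)
  also have "\<dots> = (\<Sum>(A, B)\<in>{(A, B). \<forall>k. A k + B k \<le> J k}. f A * g B * h (\<lambda>k. J k - A k - B k))"
    by (subst sum.Sigma) (simp_all add: finite_idx_le pairs)
  finally show ?thesis .
qed

lemma mps_mult_left_commute:
  fixes f g h :: "('m::finite, 'a::comm_ring_1) mps"
  shows "mps_mult f (mps_mult g h) = mps_mult g (mps_mult f h)"
proof
  fix J
  show "mps_mult f (mps_mult g h) J = mps_mult g (mps_mult f h) J"
    unfolding mps_mult_mps_mult_eq
    by (rule sum.reindex_bij_witness[of _ prod.swap prod.swap])
      (auto simp: add.commute mult.commute mult.left_commute diff_commute)
qed

lemma mps_prod_empty: "mps_prod F {} = mps_one"
  by (simp add: mps_prod_def)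

lemma mps_prod_insert:
  fixes F :: "'b \<Rightarrow> ('m::finite, 'a::comm_ring_1) mps"
  assumes "finite I" "i \<notin> I"
  shows "mps_prod F (insert i I) = mps_mult (F i) (mps_prod F I)"
proof -
  interpret comp_fun_commute "\<lambda>i acc. mps_mult (F i) acc"
    by unfold_locales (simp add: fun_eq_iff mps_mult_left_commute)
  show ?thesis
    unfolding mps_prod_def using assms by (simp add: fold_insert)
qed

lemma Supp_mps_one: "Supp (mps_one :: ('m::finite, 'a::comm_ring_1) mps) = {\<lambda>k. 0}"
  by (auto simp: Supp_def mps_one_def fun_eq_iff)

lemma Supp_mps_mult_subset: "Supp (mps_mult f g) \<subseteq> mink_plus (Supp f) (Supp g)"
proof
  fix x assume "x \<in> Supp (mps_mult f g)"
  then have "(\<Sum>A\<in>{A. idx_le A x}. f A * g (\<lambda>k. x k - A k)) \<noteq> 0"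
    by (simp add: Supp_def mps_mult_def)
  then obtain A where A: "idx_le A x" "f A * g (\<lambda>k. x k - A k) \<noteq> 0"
    by (auto elim: sum.not_neutral_contains_not_neutral)
  then show "x \<in> mink_plus (Supp f) (Supp g)"
    by (intro mink_plusI[of A _ "\<lambda>k. x k - A k"]) (auto simp: Supp_def idx_le_def fun_eq_iff)
qed

lemma mps_mult_unique_decomp:
  fixes f g :: "('m::finite, 'a::comm_ring_1) mps"
  assumes x: "x = (\<lambda>k. a k + b k)"
    and unique: "\<And>a' b'. f a' \<noteq> 0 \<Longrightarrow> g b' \<noteq> 0 \<Longrightarrow> (\<lambda>k. a' k + b' k) = x \<Longrightarrow> a' = a"
  shows "mps_mult f g x = f a * g b"
proof -
  let ?L = "{A. idx_le A x}"
  have a: "a \<in> ?L"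
    using x by (simp add: idx_le_def)
  have "f A * g (\<lambda>k. x k - A k) = 0" if "A \<in> ?L - {a}" for A
    using unique[of A "\<lambda>k. x k - A k"] that by (force simp: idx_le_def fun_eq_iff)
  then have "mps_mult f g x = f a * g (\<lambda>k. x k - a k)"
    unfolding mps_mult_def by (simp add: sum.remove[OF finite_idx_le a] sum.neutral)
  then show ?thesis
    by (simp add: x)
qed

lemma Supp_mps_Theta:
  fixes f :: "('m::finite, 'a::{idom, ring_char_0}) mps"
  shows "Supp (mps_Theta J f) = Theta_trop J (Supp f)"
proof -
  have "(\<Prod>k\<in>UNIV. fact (S k + J k) div fact (S k) :: nat) \<noteq> 0" for S :: "'m \<Rightarrow> nat"
    by (simp add: div_eq_0_iff not_less fact_mono)
  then have "S \<in> Supp (mps_Theta J f) \<longleftrightarrow> f (\<lambda>k. S k + J k) \<noteq> 0" for S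
    by (simp add: Supp_def mps_Theta_def)
  moreover have "S \<in> Theta_trop J (Supp f) \<longleftrightarrow> f (\<lambda>k. S k + J k) \<noteq> 0" for S
  proof
    assume "S \<in> Theta_trop J (Supp f)"
    then obtain s where "S = (\<lambda>k. s k - J k)" "f s \<noteq> 0" "\<forall>k. J k \<le> s k"
      unfolding Theta_trop_def Supp_def by blast
    moreover from this have "(\<lambda>k. S k + J k) = s"
      by (auto simp: fun_eq_iff)
    ultimately show "f (\<lambda>k. S k + J k) \<noteq> 0"
      by simp
  qed (force simp: Theta_trop_def Supp_def)
  ultimately show ?thesis
    by blast
qed

section \<open>Tight supports\<close>

definition tight_support :: "('m::finite, 'a::zero) mps \<Rightarrow> ('m \<Rightarrow> nat) set \<Rightarrow> bool" where
  "tight_support f E \<longleftrightarrow> Supp f \<subseteq> E \<and> Vert E \<subseteq> Supp f"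

lemma trop_eq_Vert_if_tight_support: "tight_support f E \<Longrightarrow> trop f = Vert E"
  unfolding tight_support_def trop_def by (rule Vert_eq_if_between) auto

lemma tight_support_mps_one: "tight_support (mps_one :: ('m::finite, 'a::comm_ring_1) mps) {\<lambda>k. 0}"
  using Vert_subset by (simp add: tight_support_def Supp_mps_one)

lemma tight_support_mps_Theta:
  fixes f :: "('m::finite, 'a::{idom, ring_char_0}) mps"
  shows "tight_support (mps_Theta J f) (Theta_trop J (Supp f))"
  using Vert_subset by (simp add: tight_support_def Supp_mps_Theta)

lemma tight_support_mps_mult:
  fixes f g :: "('m::finite, 'a::idom) mps"
  assumes f: "tight_support f A" and g: "tight_support g B"
  shows "tight_support (mps_mult f g) (mink_plus A B)"
  unfolding tight_support_def
proof
  have "Supp f \<subseteq> A" "Supp g \<subseteq> B"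
    using f g by (simp_all add: tight_support_def)
  then show "Supp (mps_mult f g) \<subseteq> mink_plus A B"
    using Supp_mps_mult_subset[of f g] mink_plus_mono by blast
  show "Vert (mink_plus A B) \<subseteq> Supp (mps_mult f g)"
  proof
    fix x assume x: "x \<in> Vert (mink_plus A B)"
    then obtain a b where ab: "a \<in> A" "b \<in> B" "x = (\<lambda>k. a k + b k)"
      using Vert_subset by (blast elim: mink_plusE)
    have "a \<in> Vert A"
      by (rule Vert_mink_plus_summand[OF x ab])
    moreover have "b \<in> Vert B"
      using x ab by (intro Vert_mink_plus_summand[of x B A]) (auto simp: mink_plus_commute add.commute)
    ultimately have "f a \<noteq> 0" "g b \<noteq> 0"
      using f g by (auto simp: tight_support_def Supp_def)
    moreover have "mps_mult f g x = f a * g b"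
    proof (rule mps_mult_unique_decomp[OF ab(3)])
      fix a' b' assume "f a' \<noteq> 0" "g b' \<noteq> 0" and x': "(\<lambda>k. a' k + b' k) = x"
      then have "a' \<in> A" "b' \<in> B"
        using f g by (auto simp: tight_support_def Supp_def)
      then show "a' = a"
        using Vert_mink_plus_decomp_unique[OF x ab _ _ x'[symmetric]] by blast
    qed
    ultimately show "x \<in> Supp (mps_mult f g)"
      by (simp add: Supp_def)
  qed
qed

lemma tight_support_mps_pow:
  fixes f :: "('m::finite, 'a::idom) mps"
  assumes "tight_support f A"
  shows "tight_support (mps_pow f j) (mink_pow A j)"
proof (induction j)
  case 0
  then show ?case
    using tight_support_mps_one by simp
next
  case (Suc j)
  have "mink_pow A (Suc j) = mink_plus A (mink_pow A j)"
    by (simp add: mink_plus_def)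
  then show ?case
    using tight_support_mps_mult[OF assms Suc.IH] by simp
qed

lemma tight_support_mps_prod:
  fixes F :: "'b \<Rightarrow> ('m::finite, 'a::idom) mps"
  assumes "finite I" "\<And>p. p \<in> I \<Longrightarrow> tight_support (F p) (A p)"
  shows "tight_support (mps_prod F I) (mink_sum_family A I)"
  using assms
proof (induction I rule: finite_induct)
  case empty
  then show ?case
    using tight_support_mps_one by (simp add: mps_prod_empty mink_sum_family_empty)
next
  case (insert i I)
  then show ?case
    by (simp add: mps_prod_insert mink_sum_family_insert tight_support_mps_mult)
qed

theorem mainTheorem9:
  fixes \<phi> :: "nat \<Rightarrow> ('m::finite \<Rightarrow> nat) \<Rightarrow> 'a::{alg_closed_field, field_char_0}"
    and n r :: nat
    and M :: "nat \<Rightarrow> ('m \<Rightarrow> nat) \<Rightarrow> nat"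
  assumes "n \<ge> 1"
  shows "trop (diff_mono_eval n r M \<phi>) = Vert (diff_mono_trop_sets n r M (\<lambda>i. Supp (\<phi> i)))
       \<and> Vert (diff_mono_trop_sets n r M (\<lambda>i. Supp (\<phi> i))) = eps_M n r M (\<lambda>i. Supp (\<phi> i))"
proof
  have "tight_support (diff_mono_eval n r M \<phi>) (diff_mono_trop_sets n r M (\<lambda>i. Supp (\<phi> i)))"
    unfolding diff_mono_eval_def diff_mono_trop_sets_def
    by (rule tight_support_mps_prod)
      (auto simp: finite_idx_box intro: tight_support_mps_pow tight_support_mps_Theta)
  then show "trop (diff_mono_eval n r M \<phi>) = Vert (diff_mono_trop_sets n r M (\<lambda>i. Supp (\<phi> i)))"
    by (rule trop_eq_Vert_if_tight_support)
  show "Vert (diff_mono_trop_sets n r M (\<lambda>i. Supp (\<phi> i))) = eps_M n r M (\<lambda>i. Supp (\<phi> i))"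
    by (simp add: eps_M_def)
qed

end
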